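(* There exists a universal constant $K>0$ such that the following holds. Let $n\ge 1$, $\mu_0\in\mathbb R^n$, $\sigma_0>0$, $\epsilon\in(0,\sigma_0)$, and let $(\mu_1,\sigma_1)\in\mathbb R^n\times(0,\infty)$ satisfy $d((\mu_1,\sigma_1),(\mu_0,\sigma_0))\ge \epsilon$. Then there exists a measurable test $\varphi_n:\mathbb R^n\to\{0,1\}$ such that $$\mathbb E_{\mu_0,\sigma_0}\varphi_n\le e^{-Kn\epsilon^2/\sigma_0^2},\qquad \sup_{(\mu,\sigma)\in\mathbb R^n\times(0,\infty):\ d((\mu,\sigma),(\mu_1,\sigma_1))\le \epsilon/6}\mathbb E_{\mu,\sigma}(1-\varphi_n)\le e^{-Kn\epsilon^2/\sigma_0^2}.$$
   Context: For $\mu\in\mathbb R^n$ and $\sigma>0$, $P_{\mu,\sigma}$ denotes the Gaussian distribution $\mathrm N_n(\mu,\sigma^2 I_n)$ of the observation $y\in\mathbb R^n$ and $\mathbb E_{\mu,\sigma}$ the expectation under it. $\lVert\cdot\rVert_2$ is the Euclidean norm. The metric $d$ on $\mathbb R^n\times(0,\infty)$ is defined by $d^2((\mu_1,\sigma_1),(\mu_2,\sigma_2))=n^{-1}\lVert\mu_1-\mu_2\rVert_2^2+|\sigma_1-\sigma_2|^2$. The constant $K$ does not depend on $n,\epsilon,\mu_0,\sigma_0,\mu_1,\sigma_1$. *)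

theory Defs
  imports "HOL-Probability.Probability"
begin

text \<open>Gaussian N_n(mu, s^2 I_n) on R^n, with R^n rendered as functions on the
index set {..<n} (extensional, PiM).  Only the coordinates i < n of mu matter.\<close>
definition gauss :: "nat \<Rightarrow> (nat \<Rightarrow> real) \<Rightarrow> real \<Rightarrow> (nat \<Rightarrow> real) measure" where
  "gauss n mu s = PiM {..<n} (\<lambda>i. density lborel (normal_density (mu i) s))"

definition gdist :: "nat \<Rightarrow> (nat \<Rightarrow> real) \<times> real \<Rightarrow> (nat \<Rightarrow> real) \<times> real \<Rightarrow> real" where
  "gdist n p q = sqrt ((\<Sum>i<n. (fst p i - fst q i)^2) / real n + (snd p - snd q)^2)"

end

theory Submission
  imports Defs
begin

text \<open>
  Split according to which part of \<open>d\<close> carries the separation. If \<open>\<sigma>\<^sub>1 \<ge> \<sigma>\<^sub>0 + \<epsilon>/2\<close>,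
  reject when \<open>\<parallel>y - \<mu>\<^sub>0\<parallel>\<^sup>2 > n(\<sigma>\<^sub>0\<^sup>2 + \<sigma>\<^sub>0\<epsilon>/3)\<close>; if \<open>\<sigma>\<^sub>1 \<le> \<sigma>\<^sub>0 - \<epsilon>/2\<close>, reject when
  \<open>\<parallel>y - \<mu>\<^sub>1\<parallel>\<^sup>2 < n(\<sigma>\<^sub>0\<^sup>2 - \<sigma>\<^sub>0\<epsilon>/3)\<close>; otherwise the means are far apart,
  \<open>\<parallel>\<mu>\<^sub>1 - \<mu>\<^sub>0\<parallel>\<^sup>2 \<ge> 3n\<epsilon>\<^sup>2/4\<close>, and the test rejects when
  \<open>\<langle>\<mu>\<^sub>1 - \<mu>\<^sub>0, y - \<mu>\<^sub>0\<rangle> > \<parallel>\<mu>\<^sub>1 - \<mu>\<^sub>0\<parallel>\<^sup>2/2\<close>. On the \<open>\<epsilon>/6\<close>-ball around \<open>(\<mu>\<^sub>1, \<sigma>\<^sub>1)\<close> the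
  alternative stays on the far side of the threshold, and every error probability is bounded by
  a Chernoff bound, using the closed form of \<open>E exp(aY\<^sup>2 + bY)\<close> for a Gaussian \<open>Y\<close>.
\<close>

section \<open>Quadratic exponential moments of the normal distribution\<close>

text \<open>\<open>E exp(a Y\<^sup>2 + b Y)\<close> for \<open>Y \<sim> N(u, s\<^sup>2)\<close>, valid when \<open>2 a s\<^sup>2 < 1\<close>.\<close>
definition normal_quad_mgf :: "real \<Rightarrow> real \<Rightarrow> real \<Rightarrow> real \<Rightarrow> real" where
  "normal_quad_mgf a b u s =
     exp (((b * s\<^sup>2 + u)\<^sup>2 / (1 - 2 * a * s\<^sup>2) - u\<^sup>2) / (2 * s\<^sup>2)) / sqrt (1 - 2 * a * s\<^sup>2)"

lemma normal_exponent_complete_square: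
  fixes a b u s y :: real
  assumes s: "s > 0" and g: "2 * a * s\<^sup>2 < 1"
  defines "gm \<equiv> 1 - 2 * a * s\<^sup>2"
  shows "- (y - u)\<^sup>2 / (2 * s\<^sup>2) + (a * y\<^sup>2 + b * y) =
     ((b * s\<^sup>2 + u)\<^sup>2 / gm - u\<^sup>2) / (2 * s\<^sup>2) - (y - (b * s\<^sup>2 + u) / gm)\<^sup>2 / (2 * (s / sqrt gm)\<^sup>2)"
proof -
  have gm: "gm > 0" using g unfolding gm_def by simp
  have a: "a = (1 - gm) / (2 * s\<^sup>2)" using s unfolding gm_def by (simp add: field_simps)
  have "(s / sqrt gm)\<^sup>2 = s\<^sup>2 / gm" using gm by (simp add: power_divide)
  then show ?thesis unfolding a using gm s by (simp add: field_simps power2_eq_square)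
qed

lemma normal_density_mult_exp_quadratic:
  fixes a b m c s x :: real
  assumes s: "s > 0" and g: "2 * a * s\<^sup>2 < 1"
  defines "gm \<equiv> 1 - 2 * a * s\<^sup>2"
  shows "normal_density m s x * exp (a * (x - c)\<^sup>2 + b * (x - c)) =
     normal_quad_mgf a b (m - c) s * normal_density (c + (b * s\<^sup>2 + (m - c)) / gm) (s / sqrt gm) x"
proof -
  have gm: "gm > 0" using g unfolding gm_def by simp
  define R where "R = ((b * s\<^sup>2 + (m - c))\<^sup>2 / gm - (m - c)\<^sup>2) / (2 * s\<^sup>2)"
  define E where "E = (x - c - (b * s\<^sup>2 + (m - c)) / gm)\<^sup>2 / (2 * (s / sqrt gm)\<^sup>2)"
  have exponent: "- (x - m)\<^sup>2 / (2 * s\<^sup>2) + (a * (x - c)\<^sup>2 + b * (x - c)) = R - E"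
    using normal_exponent_complete_square[OF s g, where u = "m - c" and b = b and y = "x - c"]
    unfolding R_def E_def gm_def by (simp add: algebra_simps)
  have "sqrt (2 * pi * (s / sqrt gm)\<^sup>2) = sqrt (2 * pi * s\<^sup>2) / sqrt gm"
    using gm by (simp add: power_divide real_sqrt_divide)
  then have new_density: "normal_density (c + (b * s\<^sup>2 + (m - c)) / gm) (s / sqrt gm) x =
      sqrt gm / sqrt (2 * pi * s\<^sup>2) * exp (- E)"
    unfolding normal_density_def E_def using gm by (simp add: algebra_simps)
  have "normal_density m s x * exp (a * (x - c)\<^sup>2 + b * (x - c)) =
      1 / sqrt (2 * pi * s\<^sup>2) * exp (- (x - m)\<^sup>2 / (2 * s\<^sup>2) + (a * (x - c)\<^sup>2 + b * (x - c)))"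
    unfolding normal_density_def exp_add by simp
  also have "\<dots> = 1 / sqrt (2 * pi * s\<^sup>2) * exp (R - E)"
    unfolding exponent ..
  also have "\<dots> = normal_quad_mgf a b (m - c) s * (sqrt gm / sqrt (2 * pi * s\<^sup>2) * exp (- E))"
    unfolding normal_quad_mgf_def gm_def[symmetric] R_def exp_diff
    using gm by (simp add: exp_minus field_simps)
  finally show ?thesis unfolding new_density .
qed

lemma nn_integral_normal_exp_quadratic:
  fixes a b m c s :: real
  assumes s: "s > 0" and g: "2 * a * s\<^sup>2 < 1"
  shows "(\<integral>\<^sup>+x. ennreal (exp (a * (x - c)\<^sup>2 + b * (x - c))) \<partial>density lborel (normal_density m s)) =
     ennreal (normal_quad_mgf a b (m - c) s)"
proof -
  define gm where "gm = 1 - 2 * a * s\<^sup>2"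
  define m' where "m' = c + (b * s\<^sup>2 + (m - c)) / gm"
  have s': "s / sqrt gm > 0" using s g unfolding gm_def by simp
  have mgf_nonneg: "normal_quad_mgf a b (m - c) s \<ge> 0"
    using g unfolding normal_quad_mgf_def by simp
  have "(\<integral>\<^sup>+x. ennreal (exp (a * (x - c)\<^sup>2 + b * (x - c))) \<partial>density lborel (normal_density m s)) =
      (\<integral>\<^sup>+x. ennreal (normal_quad_mgf a b (m - c) s) * ennreal (normal_density m' (s / sqrt gm) x)
        \<partial>lborel)"
    using normal_density_mult_exp_quadratic[OF s g] mgf_nonneg
    by (subst nn_integral_density) (auto intro!: nn_integral_cong
        simp: ennreal_mult'[symmetric] m'_def gm_def)
  also have "\<dots> = ennreal (normal_quad_mgf a b (m - c) s)"
    using s' by (simp add: nn_integral_cmult nn_integral_eq_integral integrable_normal_density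
        integral_normal_density)
  finally show ?thesis .
qed

section \<open>Chernoff bounds for the product Gaussian\<close>

lemma space_gauss: "space (gauss n mu s) = space (PiM {..<n} (\<lambda>_. lborel))"
  unfolding gauss_def by (simp add: space_PiM)

lemma sets_gauss: "sets (gauss n mu s) = sets (PiM {..<n} (\<lambda>_. lborel))"
  unfolding gauss_def by (intro sets_PiM_cong) auto

lemma prob_space_gauss: "s > 0 \<Longrightarrow> prob_space (gauss n mu s)"
  unfolding gauss_def by (intro prob_space_PiM prob_space_normal_density)

lemma pred_sets_gauss:
  "Measurable.pred (PiM {..<n} (\<lambda>_. lborel)) P \<Longrightarrow> {x \<in> space (gauss n mu s). P x} \<in> sets (gauss n mu s)"
  unfolding sets_gauss space_gauss by (rule predE)

lemma gauss_chernoff_quadratic: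
  fixes a t s :: real and b c mu :: "nat \<Rightarrow> real"
  assumes s: "s > 0" and g: "2 * a * s\<^sup>2 < 1"
  shows "measure (gauss n mu s)
      {x \<in> space (gauss n mu s). t \<le> (\<Sum>i<n. a * (x i - c i)\<^sup>2 + b i * (x i - c i))}
     \<le> exp (- t) * (\<Prod>i<n. normal_quad_mgf a (b i) (mu i - c i) s)"
proof -
  let ?M = "\<lambda>i. density lborel (normal_density (mu i) s)"
  interpret product_sigma_finite ?M
    unfolding product_sigma_finite_def
    using prob_space_imp_sigma_finite[OF prob_space_normal_density] s by blast
  let ?h = "\<lambda>i y. a * (y - c i)\<^sup>2 + b i * (y - c i)"
  let ?A = "{x \<in> space (gauss n mu s). t \<le> (\<Sum>i<n. ?h i (x i))}"
  have mgf_nonneg: "normal_quad_mgf a (b i) (mu i - c i) s \<ge> 0" for i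
    using g unfolding normal_quad_mgf_def by simp
  have "emeasure (gauss n mu s) ?A = (\<integral>\<^sup>+x. indicator ?A x \<partial>gauss n mu s)"
    by (simp add: pred_sets_gauss)
  also have "\<dots> \<le> (\<integral>\<^sup>+x. ennreal (exp (- t)) * (\<Prod>i<n. ennreal (exp (?h i (x i)))) \<partial>gauss n mu s)"
  proof (rule nn_integral_mono)
    fix x
    have "indicator ?A x \<le> ennreal (exp ((\<Sum>i<n. ?h i (x i)) - t))"
      by (auto simp: indicator_def)
    also have "exp ((\<Sum>i<n. ?h i (x i)) - t) = exp (- t) * (\<Prod>i<n. exp (?h i (x i)))"
      by (simp add: exp_sum exp_diff exp_minus field_simps)
    finally show "indicator ?A x \<le> ennreal (exp (- t)) * (\<Prod>i<n. ennreal (exp (?h i (x i))))"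
      by (simp add: prod_ennreal ennreal_mult'[symmetric])
  qed
  also have "\<dots> = ennreal (exp (- t)) * (\<integral>\<^sup>+x. (\<Prod>i<n. ennreal (exp (?h i (x i)))) \<partial>gauss n mu s)"
    by (rule nn_integral_cmult) (unfold gauss_def, measurable)
  also have "\<dots> = ennreal (exp (- t)) * (\<Prod>i<n. \<integral>\<^sup>+y. ennreal (exp (?h i y)) \<partial>?M i)"
    unfolding gauss_def by (subst product_nn_integral_prod) auto
  also have "\<dots> = ennreal (exp (- t)) * ennreal (\<Prod>i<n. normal_quad_mgf a (b i) (mu i - c i) s)"
    using mgf_nonneg by (simp add: nn_integral_normal_exp_quadratic[OF s g] prod_ennreal)
  also have "\<dots> = ennreal (exp (- t) * (\<Prod>i<n. normal_quad_mgf a (b i) (mu i - c i) s))"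
    using mgf_nonneg by (simp add: ennreal_mult prod_nonneg)
  finally show ?thesis
    using mgf_nonneg unfolding measure_def
    by (intro enn2real_leI) (auto intro!: mult_nonneg_nonneg prod_nonneg)
qed

lemma normal_quad_mgf_linear: "s > 0 \<Longrightarrow> normal_quad_mgf 0 b u s = exp (b * u + b\<^sup>2 * s\<^sup>2 / 2)"
  unfolding normal_quad_mgf_def by (simp add: field_simps power2_eq_square)

lemma normal_quad_mgf_square:
  assumes "s > 0" "2 * a * s\<^sup>2 < 1"
  shows "normal_quad_mgf a 0 u s = exp (a * u\<^sup>2 / (1 - 2 * a * s\<^sup>2)) / sqrt (1 - 2 * a * s\<^sup>2)"
proof -
  define g where "g = 1 - 2 * a * s\<^sup>2"
  have "g > 0" using assms unfolding g_def by simp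
  then have "u\<^sup>2 / g - u\<^sup>2 = 2 * s\<^sup>2 * (a * u\<^sup>2 / g)"
    unfolding g_def by (simp add: field_simps)
  then have "(u\<^sup>2 / g - u\<^sup>2) / (2 * s\<^sup>2) = a * u\<^sup>2 / g"
    using assms by simp
  then show ?thesis unfolding normal_quad_mgf_def g_def by simp
qed

lemma power_inverse_sqrt_eq_exp: "g > 0 \<Longrightarrow> (1 / sqrt g) ^ n = exp (- (real n * ln g / 2))"
  by (simp add: sqrt_def root_powr_inverse ln_powr powr_def power_divide exp_of_nat_mult[symmetric]
      exp_minus inverse_eq_divide)

lemma gauss_sq_dist_upper_tail:
  fixes c mu :: "nat \<Rightarrow> real" and n :: nat
  assumes s: "s > 0" and \<gamma>: "0 \<le> \<gamma>" "\<gamma> < 1"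
  defines "D \<equiv> \<Sum>i<n. (mu i - c i)\<^sup>2"
  shows "measure (gauss n mu s) {x \<in> space (gauss n mu s). T \<le> (\<Sum>i<n. (x i - c i)\<^sup>2)}
     \<le> exp (\<gamma> * (D / (1 - \<gamma>) - T) / (2 * s\<^sup>2) - real n * ln (1 - \<gamma>) / 2)"
proof -
  interpret prob_space "gauss n mu s" using s by (rule prob_space_gauss)
  define l where "l = \<gamma> / (2 * s\<^sup>2)"
  have l: "0 \<le> l" "2 * l * s\<^sup>2 = \<gamma>" using s \<gamma> unfolding l_def by auto
  have "prob {x \<in> space (gauss n mu s). T \<le> (\<Sum>i<n. (x i - c i)\<^sup>2)}
      \<le> prob {x \<in> space (gauss n mu s). l * T \<le> (\<Sum>i<n. l * (x i - c i)\<^sup>2 + 0 * (x i - c i))}"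
    using l by (intro finite_measure_mono pred_sets_gauss)
      (auto simp: sum_distrib_left[symmetric] intro: mult_left_mono)
  also have "\<dots> \<le> exp (- (l * T)) * (\<Prod>i<n. normal_quad_mgf l 0 (mu i - c i) s)"
    using gauss_chernoff_quadratic[OF s, where a = l and t = "l * T" and b = "\<lambda>_. 0"] l \<gamma> by simp
  also have "(\<Prod>i<n. normal_quad_mgf l 0 (mu i - c i) s) = exp (l * D / (1 - \<gamma>)) * (1 / sqrt (1 - \<gamma>)) ^ n"
    using l \<gamma> unfolding D_def
    by (simp add: normal_quad_mgf_square[OF s] exp_sum prod_dividef power_one_over
        sum_divide_distrib sum_distrib_left)
  also have "exp (- (l * T)) * (exp (l * D / (1 - \<gamma>)) * (1 / sqrt (1 - \<gamma>)) ^ n) =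
      exp (- (l * T) + l * D / (1 - \<gamma>) - real n * ln (1 - \<gamma>) / 2)"
    using \<gamma> by (simp add: power_inverse_sqrt_eq_exp mult_exp_exp)
  also have "- (l * T) + l * D / (1 - \<gamma>) = \<gamma> * (D / (1 - \<gamma>) - T) / (2 * s\<^sup>2)"
    using s \<gamma> unfolding l_def by (simp add: field_simps)
  finally show ?thesis .
qed

lemma gauss_sq_dist_lower_tail:
  fixes c mu :: "nat \<Rightarrow> real"
  assumes s: "s > 0" and \<gamma>: "0 \<le> \<gamma>"
  shows "measure (gauss n mu s) {x \<in> space (gauss n mu s). (\<Sum>i<n. (x i - c i)\<^sup>2) \<le> T}
     \<le> exp (\<gamma> * T / (2 * s\<^sup>2) - real n * ln (1 + \<gamma>) / 2)"
proof -
  interpret prob_space "gauss n mu s" using s by (rule prob_space_gauss)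
  define l where "l = \<gamma> / (2 * s\<^sup>2)"
  have l: "0 \<le> l" "2 * (- l) * s\<^sup>2 = - \<gamma>" using s \<gamma> unfolding l_def by auto
  have "prob {x \<in> space (gauss n mu s). (\<Sum>i<n. (x i - c i)\<^sup>2) \<le> T}
      \<le> prob {x \<in> space (gauss n mu s). - (l * T) \<le> (\<Sum>i<n. - l * (x i - c i)\<^sup>2 + 0 * (x i - c i))}"
    using l by (intro finite_measure_mono pred_sets_gauss)
      (auto simp: sum_negf sum_distrib_left[symmetric] intro: mult_left_mono)
  also have "\<dots> \<le> exp (l * T) * (\<Prod>i<n. normal_quad_mgf (- l) 0 (mu i - c i) s)"
    using gauss_chernoff_quadratic[OF s, where a = "- l" and t = "- (l * T)" and b = "\<lambda>_. 0"] l \<gamma> by simp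
  also have "\<dots> \<le> exp (l * T) * (1 / sqrt (1 + \<gamma>)) ^ n"
  proof -
    have "0 \<le> normal_quad_mgf (- l) 0 (mu i - c i) s \<and>
        normal_quad_mgf (- l) 0 (mu i - c i) s \<le> 1 / sqrt (1 + \<gamma>)" for i
      using l \<gamma> by (simp add: normal_quad_mgf_square[OF s] divide_right_mono mult_nonpos_nonneg)
    then have "(\<Prod>i<n. normal_quad_mgf (- l) 0 (mu i - c i) s) \<le> (\<Prod>i<n. 1 / sqrt (1 + \<gamma>))"
      by (intro prod_mono)
    then show ?thesis by simp
  qed
  also have "\<dots> = exp (\<gamma> * T / (2 * s\<^sup>2) - real n * ln (1 + \<gamma>) / 2)"
    using \<gamma> by (simp add: l_def power_inverse_sqrt_eq_exp mult_exp_exp)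
  finally show ?thesis .
qed

lemma gauss_linear_upper_tail:
  fixes c mu v :: "nat \<Rightarrow> real"
  assumes s: "s > 0" and l: "0 \<le> l"
  shows "measure (gauss n mu s) {x \<in> space (gauss n mu s). t \<le> (\<Sum>i<n. v i * (x i - c i))}
     \<le> exp (l * ((\<Sum>i<n. v i * (mu i - c i)) - t) + l\<^sup>2 * s\<^sup>2 * (\<Sum>i<n. (v i)\<^sup>2) / 2)"
proof -
  interpret prob_space "gauss n mu s" using s by (rule prob_space_gauss)
  have "prob {x \<in> space (gauss n mu s). t \<le> (\<Sum>i<n. v i * (x i - c i))}
      \<le> prob {x \<in> space (gauss n mu s). l * t \<le> (\<Sum>i<n. 0 * (x i - c i)\<^sup>2 + l * v i * (x i - c i))}"
    using l by (intro finite_measure_mono pred_sets_gauss)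
      (auto simp: sum_distrib_left[symmetric] mult.assoc intro: mult_left_mono)
  also have "\<dots> \<le> exp (- (l * t)) * (\<Prod>i<n. normal_quad_mgf 0 (l * v i) (mu i - c i) s)"
    using gauss_chernoff_quadratic[OF s, where a = 0 and t = "l * t" and b = "\<lambda>i. l * v i"] by simp
  also have "(\<Prod>i<n. normal_quad_mgf 0 (l * v i) (mu i - c i) s) =
      exp (\<Sum>i<n. l * v i * (mu i - c i) + (l * v i)\<^sup>2 * s\<^sup>2 / 2)"
    by (simp add: normal_quad_mgf_linear[OF s] exp_sum)
  also have "(\<Sum>i<n. l * v i * (mu i - c i) + (l * v i)\<^sup>2 * s\<^sup>2 / 2) =
      l * (\<Sum>i<n. v i * (mu i - c i)) + l\<^sup>2 * s\<^sup>2 * (\<Sum>i<n. (v i)\<^sup>2) / 2"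
    by (simp add: sum.distrib sum_distrib_left sum_divide_distrib power_mult_distrib mult_ac)
  also have "exp (- (l * t)) * exp \<dots> =
      exp (l * ((\<Sum>i<n. v i * (mu i - c i)) - t) + l\<^sup>2 * s\<^sup>2 * (\<Sum>i<n. (v i)\<^sup>2) / 2)"
    by (simp add: mult_exp_exp algebra_simps)
  finally show ?thesis .
qed

section \<open>Error probabilities of the three tests\<close>

lemma variance_increase_type_I:
  fixes mu0 :: "nat \<Rightarrow> real"
  assumes sg: "sg > 0" and d: "0 < d" "d < sg"
  shows "measure (gauss n mu0 sg)
      {x \<in> space (gauss n mu0 sg). real n * (sg\<^sup>2 + sg * d / 3) < (\<Sum>i<n. (x i - mu0 i)\<^sup>2)}
     \<le> exp (- real n * d\<^sup>2 / (144 * sg\<^sup>2))"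
proof -
  interpret prob_space "gauss n mu0 sg" using sg by (rule prob_space_gauss)
  define T where "T = real n * (sg\<^sup>2 + sg * d / 3)"
  define \<gamma> where "\<gamma> = d / (12 * sg)"
  have \<gamma>: "0 < \<gamma>" "\<gamma> \<le> 1 / 2" using sg d unfolding \<gamma>_def by auto
  have "prob {x \<in> space (gauss n mu0 sg). T < (\<Sum>i<n. (x i - mu0 i)\<^sup>2)}
      \<le> prob {x \<in> space (gauss n mu0 sg). T \<le> (\<Sum>i<n. (x i - mu0 i)\<^sup>2)}"
    by (intro finite_measure_mono pred_sets_gauss) auto
  also have "\<dots> \<le> exp (- \<gamma> * T / (2 * sg\<^sup>2) - real n * ln (1 - \<gamma>) / 2)"
    using gauss_sq_dist_upper_tail[OF sg, where \<gamma> = \<gamma> and mu = mu0 and c = mu0] \<gamma> by simp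
  also have "\<dots> \<le> exp (- real n * d\<^sup>2 / (144 * sg\<^sup>2))"
    unfolding exp_le_cancel_iff
  proof -
    have "- \<gamma> - 2 * \<gamma>\<^sup>2 \<le> ln (1 - \<gamma>)"
      using \<gamma> by (intro ln_one_minus_pos_lower_bound) auto
    then have "- \<gamma> * (1 + d / (3 * sg)) - ln (1 - \<gamma>) \<le> 2 * \<gamma>\<^sup>2 - \<gamma> * d / (3 * sg)"
      by (simp add: algebra_simps)
    also have "\<dots> = - d\<^sup>2 / (72 * sg\<^sup>2)"
      using sg unfolding \<gamma>_def by (simp add: field_simps power2_eq_square)
    finally have "real n / 2 * (- \<gamma> * (1 + d / (3 * sg)) - ln (1 - \<gamma>))
        \<le> real n / 2 * (- d\<^sup>2 / (72 * sg\<^sup>2))"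
      by (intro mult_left_mono) auto
    moreover have "- \<gamma> * T / (2 * sg\<^sup>2) - real n * ln (1 - \<gamma>) / 2 =
        real n / 2 * (- \<gamma> * (1 + d / (3 * sg)) - ln (1 - \<gamma>))"
      using sg unfolding T_def by (simp add: field_simps power2_eq_square)
    moreover have "real n / 2 * (- d\<^sup>2 / (72 * sg\<^sup>2)) = - real n * d\<^sup>2 / (144 * sg\<^sup>2)"
      by simp
    ultimately show "- \<gamma> * T / (2 * sg\<^sup>2) - real n * ln (1 - \<gamma>) / 2 \<le> - real n * d\<^sup>2 / (144 * sg\<^sup>2)"
      by linarith
  qed
  finally show ?thesis unfolding T_def .
qed

lemma variance_increase_type_II:
  fixes mu0 mu :: "nat \<Rightarrow> real"
  assumes sg: "sg > 0" and d: "0 < d" "d < sg" and s: "sg + d / 3 \<le> s"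
  shows "measure (gauss n mu s)
      {x \<in> space (gauss n mu s). (\<Sum>i<n. (x i - mu0 i)\<^sup>2) \<le> real n * (sg\<^sup>2 + sg * d / 3)}
     \<le> exp (- real n * d\<^sup>2 / (200 * sg\<^sup>2))"
proof -
  have s0: "s > 0" using sg d s by linarith
  define \<gamma> where "\<gamma> = d / (10 * sg)"
  define \<rho> where "\<rho> = (sg\<^sup>2 + sg * d / 3) / s\<^sup>2"
  have \<gamma>: "0 < \<gamma>" "\<gamma> \<le> 1" using sg d unfolding \<gamma>_def by auto
  have \<rho>: "\<rho> \<le> 1 - 2 * \<gamma>"
  proof -
    have "(sg + d / 3)\<^sup>2 \<le> s\<^sup>2" using s sg d by (intro power_mono) auto
    moreover have "sg\<^sup>2 + 2 * sg * d / 3 \<le> (sg + d / 3)\<^sup>2"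
      by (simp add: power2_eq_square algebra_simps)
    ultimately have "sg\<^sup>2 + 2 * sg * d / 3 \<le> s\<^sup>2" by linarith
    then have "(sg\<^sup>2 + 2 * sg * d / 3) * (1 - 2 * \<gamma>) \<le> s\<^sup>2 * (1 - 2 * \<gamma>)"
      using \<gamma> sg d unfolding \<gamma>_def by (intro mult_right_mono) auto
    moreover have "(sg\<^sup>2 + 2 * sg * d / 3) * (1 - 2 * \<gamma>) = sg\<^sup>2 + 7 * sg * d / 15 - 2 * d\<^sup>2 / 15"
      using sg unfolding \<gamma>_def by (simp add: field_simps power2_eq_square)
    moreover have "d\<^sup>2 \<le> sg * d" using d by (simp add: power2_eq_square)
    ultimately have "sg\<^sup>2 + sg * d / 3 \<le> s\<^sup>2 * (1 - 2 * \<gamma>)" by linarith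
    then show ?thesis unfolding \<rho>_def using s0 by (simp add: field_simps)
  qed
  have "measure (gauss n mu s)
      {x \<in> space (gauss n mu s). (\<Sum>i<n. (x i - mu0 i)\<^sup>2) \<le> real n * (sg\<^sup>2 + sg * d / 3)}
     \<le> exp (\<gamma> * (real n * (sg\<^sup>2 + sg * d / 3)) / (2 * s\<^sup>2) - real n * ln (1 + \<gamma>) / 2)"
    using gauss_sq_dist_lower_tail[OF s0] \<gamma> by simp
  also have "\<dots> \<le> exp (- real n * d\<^sup>2 / (200 * sg\<^sup>2))"
    unfolding exp_le_cancel_iff
  proof -
    have "\<gamma> - \<gamma>\<^sup>2 \<le> ln (1 + \<gamma>)"
      using \<gamma> by (intro ln_one_plus_pos_lower_bound) auto
    moreover have "\<gamma> * \<rho> \<le> \<gamma> * (1 - 2 * \<gamma>)" using \<rho> \<gamma> by (intro mult_left_mono) auto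
    moreover have "\<gamma> * (1 - 2 * \<gamma>) = \<gamma> - 2 * \<gamma>\<^sup>2" by (simp add: power2_eq_square algebra_simps)
    ultimately have "\<gamma> * \<rho> - ln (1 + \<gamma>) \<le> - \<gamma>\<^sup>2" by linarith
    then have "real n / 2 * (\<gamma> * \<rho> - ln (1 + \<gamma>)) \<le> real n / 2 * (- \<gamma>\<^sup>2)"
      by (intro mult_left_mono) auto
    moreover have "\<gamma> * (real n * (sg\<^sup>2 + sg * d / 3)) / (2 * s\<^sup>2) - real n * ln (1 + \<gamma>) / 2 =
        real n / 2 * (\<gamma> * \<rho> - ln (1 + \<gamma>))"
      using s0 unfolding \<rho>_def by (simp add: field_simps)
    moreover have "real n / 2 * (- \<gamma>\<^sup>2) = - real n * d\<^sup>2 / (200 * sg\<^sup>2)"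
      unfolding \<gamma>_def by (simp add: field_simps power2_eq_square)
    ultimately show "\<gamma> * (real n * (sg\<^sup>2 + sg * d / 3)) / (2 * s\<^sup>2) - real n * ln (1 + \<gamma>) / 2
        \<le> - real n * d\<^sup>2 / (200 * sg\<^sup>2)" by linarith
  qed
  finally show ?thesis .
qed

lemma variance_decrease_type_I:
  fixes mu0 mu1 :: "nat \<Rightarrow> real"
  assumes sg: "sg > 0" and d: "0 < d" "d < sg"
  shows "measure (gauss n mu0 sg)
      {x \<in> space (gauss n mu0 sg). (\<Sum>i<n. (x i - mu1 i)\<^sup>2) < real n * (sg\<^sup>2 - sg * d / 3)}
     \<le> exp (- real n * d\<^sup>2 / (72 * sg\<^sup>2))"
proof -
  interpret prob_space "gauss n mu0 sg" using sg by (rule prob_space_gauss)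
  define T where "T = real n * (sg\<^sup>2 - sg * d / 3)"
  define \<gamma> where "\<gamma> = d / (6 * sg)"
  have \<gamma>: "0 < \<gamma>" "\<gamma> \<le> 1" using sg d unfolding \<gamma>_def by auto
  have "prob {x \<in> space (gauss n mu0 sg). (\<Sum>i<n. (x i - mu1 i)\<^sup>2) < T}
      \<le> prob {x \<in> space (gauss n mu0 sg). (\<Sum>i<n. (x i - mu1 i)\<^sup>2) \<le> T}"
    by (intro finite_measure_mono pred_sets_gauss) auto
  also have "\<dots> \<le> exp (\<gamma> * T / (2 * sg\<^sup>2) - real n * ln (1 + \<gamma>) / 2)"
    using gauss_sq_dist_lower_tail[OF sg] \<gamma> by simp
  also have "\<dots> \<le> exp (- real n * d\<^sup>2 / (72 * sg\<^sup>2))"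
    unfolding exp_le_cancel_iff
  proof -
    have "\<gamma> - \<gamma>\<^sup>2 \<le> ln (1 + \<gamma>)"
      using \<gamma> by (intro ln_one_plus_pos_lower_bound) auto
    then have "\<gamma> * (1 - d / (3 * sg)) - ln (1 + \<gamma>) \<le> \<gamma>\<^sup>2 - \<gamma> * d / (3 * sg)"
      by (simp add: algebra_simps)
    also have "\<dots> = - d\<^sup>2 / (36 * sg\<^sup>2)"
      using sg unfolding \<gamma>_def by (simp add: field_simps power2_eq_square)
    finally have "real n / 2 * (\<gamma> * (1 - d / (3 * sg)) - ln (1 + \<gamma>))
        \<le> real n / 2 * (- d\<^sup>2 / (36 * sg\<^sup>2))"
      by (intro mult_left_mono) auto
    moreover have "\<gamma> * T / (2 * sg\<^sup>2) - real n * ln (1 + \<gamma>) / 2 =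
        real n / 2 * (\<gamma> * (1 - d / (3 * sg)) - ln (1 + \<gamma>))"
      using sg unfolding T_def by (simp add: field_simps power2_eq_square)
    moreover have "real n / 2 * (- d\<^sup>2 / (36 * sg\<^sup>2)) = - real n * d\<^sup>2 / (72 * sg\<^sup>2)"
      by simp
    ultimately show "\<gamma> * T / (2 * sg\<^sup>2) - real n * ln (1 + \<gamma>) / 2 \<le> - real n * d\<^sup>2 / (72 * sg\<^sup>2)"
      by linarith
  qed
  finally show ?thesis unfolding T_def .
qed

lemma variance_decrease_type_II:
  fixes mu1 mu :: "nat \<Rightarrow> real"
  assumes sg: "sg > 0" and d: "0 < d" "d < sg" and s: "0 < s" "s \<le> sg - d / 3"
    and mean: "(\<Sum>i<n. (mu i - mu1 i)\<^sup>2) \<le> real n * d\<^sup>2 / 36"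
  shows "measure (gauss n mu s)
      {x \<in> space (gauss n mu s). real n * (sg\<^sup>2 - sg * d / 3) \<le> (\<Sum>i<n. (x i - mu1 i)\<^sup>2)}
     \<le> exp (- real n * d\<^sup>2 / (432 * sg\<^sup>2))"
proof -
  define D where "D = (\<Sum>i<n. (mu i - mu1 i)\<^sup>2)"
  define T where "T = real n * (sg\<^sup>2 - sg * d / 3)"
  define \<gamma> where "\<gamma> = d / (24 * sg)"
  have \<gamma>: "0 < \<gamma>" "\<gamma> \<le> 1 / 2" using sg d unfolding \<gamma>_def by auto
  have D0: "D \<ge> 0" unfolding D_def by (simp add: sum_nonneg)
  have "measure (gauss n mu s) {x \<in> space (gauss n mu s). T \<le> (\<Sum>i<n. (x i - mu1 i)\<^sup>2)}
      \<le> exp (\<gamma> * (D / (1 - \<gamma>) - T) / (2 * s\<^sup>2) - real n * ln (1 - \<gamma>) / 2)"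
    unfolding D_def using gauss_sq_dist_upper_tail[OF s(1)] \<gamma> by simp
  also have "\<dots> \<le> exp (- real n * d\<^sup>2 / (432 * sg\<^sup>2))"
    unfolding exp_le_cancel_iff
  proof -
    have "D / (1 - \<gamma>) \<le> D * (1 + 2 * \<gamma>)"
      using \<gamma> D0 by (simp add: field_simps mult_left_mono)
    then have "\<gamma> * (D / (1 - \<gamma>) - T) / (2 * s\<^sup>2) \<le> \<gamma> * (D * (1 + 2 * \<gamma>) - T) / (2 * s\<^sup>2)"
      using \<gamma> by (intro divide_right_mono mult_left_mono diff_right_mono) auto
    moreover have "- ln (1 - \<gamma>) \<le> \<gamma> + 2 * \<gamma>\<^sup>2"
      using ln_one_minus_pos_lower_bound[of \<gamma>] \<gamma> by simp
    then have "real n * (- ln (1 - \<gamma>)) / 2 \<le> real n * (\<gamma> + 2 * \<gamma>\<^sup>2) / 2"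
      by (intro divide_right_mono mult_left_mono) auto
    ultimately have "\<gamma> * (D / (1 - \<gamma>) - T) / (2 * s\<^sup>2) - real n * ln (1 - \<gamma>) / 2
        \<le> \<gamma> * (D * (1 + 2 * \<gamma>) - T) / (2 * s\<^sup>2) + real n * (\<gamma> + 2 * \<gamma>\<^sup>2) / 2"
      by simp
    also have "\<dots> = \<gamma> / (2 * s\<^sup>2) * ((1 + 2 * \<gamma>) * (D + real n * s\<^sup>2) - T)"
      using s by (simp add: field_simps power2_eq_square)
    also have "\<dots> \<le> \<gamma> / (2 * s\<^sup>2) * (- real n * sg * d / 9)"
    proof (intro mult_left_mono)
      have "s\<^sup>2 \<le> (sg - d / 3)\<^sup>2" using s by (intro power_mono) auto
      then have "real n * s\<^sup>2 \<le> real n * (sg - d / 3)\<^sup>2" by (intro mult_left_mono) auto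
      then have "D + real n * s\<^sup>2 \<le> real n * (d\<^sup>2 / 36 + (sg - d / 3)\<^sup>2)"
        using mean unfolding D_def distrib_left by linarith
      also have "\<dots> \<le> real n * (sg\<^sup>2 - 19 * sg * d / 36)"
        using d by (intro mult_left_mono) (auto simp: power2_eq_square algebra_simps)
      finally have "(1 + 2 * \<gamma>) * (D + real n * s\<^sup>2)
          \<le> (1 + 2 * \<gamma>) * (real n * (sg\<^sup>2 - 19 * sg * d / 36))"
        using \<gamma> by (intro mult_left_mono) auto
      also have "\<dots> \<le> real n * (sg\<^sup>2 - 19 * sg * d / 36) + 2 * \<gamma> * real n * sg\<^sup>2"
        using \<gamma> sg d by (simp add: algebra_simps mult_left_mono)
      also have "\<dots> = T - real n * sg * d / 9"
        using sg unfolding T_def \<gamma>_def by (simp add: field_simps power2_eq_square)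
      finally show "(1 + 2 * \<gamma>) * (D + real n * s\<^sup>2) - T \<le> - real n * sg * d / 9" by simp
    qed (use \<gamma> s in auto)
    also have "\<dots> = - real n * d\<^sup>2 / (432 * s\<^sup>2)"
      using sg unfolding \<gamma>_def by (simp add: field_simps power2_eq_square)
    also have "\<dots> \<le> - real n * d\<^sup>2 / (432 * sg\<^sup>2)"
      using s d by (intro divide_left_mono_neg mult_left_mono power_mono) auto
    finally show "\<gamma> * (D / (1 - \<gamma>) - T) / (2 * s\<^sup>2) - real n * ln (1 - \<gamma>) / 2
        \<le> - real n * d\<^sup>2 / (432 * sg\<^sup>2)" .
  qed
  finally show ?thesis unfolding T_def .
qed

lemma mean_shift_type_I:
  fixes mu0 mu1 :: "nat \<Rightarrow> real" and n :: nat
  assumes sg: "sg > 0"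
  defines "V \<equiv> \<Sum>i<n. (mu1 i - mu0 i)\<^sup>2"
  shows "measure (gauss n mu0 sg)
      {x \<in> space (gauss n mu0 sg). V / 2 < (\<Sum>i<n. (mu1 i - mu0 i) * (x i - mu0 i))}
     \<le> exp (- V / (8 * sg\<^sup>2))"
proof -
  interpret prob_space "gauss n mu0 sg" using sg by (rule prob_space_gauss)
  have "prob {x \<in> space (gauss n mu0 sg). V / 2 < (\<Sum>i<n. (mu1 i - mu0 i) * (x i - mu0 i))}
      \<le> prob {x \<in> space (gauss n mu0 sg). V / 2 \<le> (\<Sum>i<n. (mu1 i - mu0 i) * (x i - mu0 i))}"
    by (intro finite_measure_mono pred_sets_gauss) auto
  also have "\<dots> \<le> exp (1 / (2 * sg\<^sup>2) * ((\<Sum>i<n. (mu1 i - mu0 i) * (mu0 i - mu0 i)) - V / 2)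
      + (1 / (2 * sg\<^sup>2))\<^sup>2 * sg\<^sup>2 * V / 2)"
    unfolding V_def by (rule gauss_linear_upper_tail[OF sg]) simp
  also have "\<dots> = exp (- V / (8 * sg\<^sup>2))"
    using sg by (simp add: field_simps power2_eq_square)
  finally show ?thesis .
qed

lemma mean_shift_type_II:
  fixes mu0 mu1 mu :: "nat \<Rightarrow> real" and n :: nat
  assumes sg: "sg > 0" and s: "0 < s" "s \<le> 2 * sg"
  defines "V \<equiv> \<Sum>i<n. (mu1 i - mu0 i)\<^sup>2"
  assumes mean: "(\<Sum>i<n. (mu i - mu1 i)\<^sup>2) \<le> V / 27"
  shows "measure (gauss n mu s)
      {x \<in> space (gauss n mu s). (\<Sum>i<n. (mu1 i - mu0 i) * (x i - mu0 i)) \<le> V / 2}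
     \<le> exp (- V / (200 * sg\<^sup>2))"
proof -
  define l where "l = 1 / (20 * sg\<^sup>2)"
  define P where "P = (\<Sum>i<n. (mu1 i - mu0 i) * (mu i - mu0 i))"
  have V0: "V \<ge> 0" unfolding V_def by (simp add: sum_nonneg)
  have P: "P \<ge> 7 * V / 10"
  proof -
    have "- ((mu1 i - mu0 i)\<^sup>2 / 4 + (mu i - mu1 i)\<^sup>2) \<le> (mu1 i - mu0 i) * (mu i - mu1 i)" for i
      using zero_le_power2[of "(mu1 i - mu0 i) / 2 + (mu i - mu1 i)"]
      by (simp add: power2_eq_square algebra_simps)
    then have "(\<Sum>i<n. - ((mu1 i - mu0 i)\<^sup>2 / 4 + (mu i - mu1 i)\<^sup>2))
        \<le> (\<Sum>i<n. (mu1 i - mu0 i) * (mu i - mu1 i))"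
      by (rule sum_mono)
    moreover have "(\<Sum>i<n. - ((mu1 i - mu0 i)\<^sup>2 / 4 + (mu i - mu1 i)\<^sup>2))
        = - (V / 4 + (\<Sum>i<n. (mu i - mu1 i)\<^sup>2))"
      unfolding V_def by (simp add: sum_negf sum_subtractf sum_divide_distrib)
    moreover have "P = V + (\<Sum>i<n. (mu1 i - mu0 i) * (mu i - mu1 i))"
      unfolding P_def V_def by (simp add: sum.distrib[symmetric] power2_eq_square algebra_simps)
    ultimately show ?thesis using mean V0 by linarith
  qed
  have exponent: "l * (- P + V / 2) + l\<^sup>2 * s\<^sup>2 * V / 2 \<le> - V / (200 * sg\<^sup>2)"
  proof -
    have lpos: "l > 0" using sg unfolding l_def by simp
    have "s\<^sup>2 \<le> (2 * sg)\<^sup>2" using s by (intro power_mono) auto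
    then have "l * s\<^sup>2 \<le> l * (4 * sg\<^sup>2)" using lpos by (simp add: power_mult_distrib)
    also have "\<dots> = 1 / 5" using sg unfolding l_def by simp
    finally have "(l * s\<^sup>2) * (l * V) / 2 \<le> (1 / 5) * (l * V) / 2"
      using lpos V0 by (intro divide_right_mono mult_right_mono) auto
    then have "l\<^sup>2 * s\<^sup>2 * V / 2 \<le> l * V / 10" by (simp add: power2_eq_square mult_ac)
    moreover have "l * (- P + V / 2) \<le> l * (- V / 5)"
      using P sg unfolding l_def by (intro mult_left_mono) auto
    ultimately have "l * (- P + V / 2) + l\<^sup>2 * s\<^sup>2 * V / 2 \<le> - (l * V / 10)" by linarith
    then show ?thesis unfolding l_def using sg by (simp add: field_simps)
  qed
  have reflected: "{x \<in> space (gauss n mu s). (\<Sum>i<n. (mu1 i - mu0 i) * (x i - mu0 i)) \<le> V / 2}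
      = {x \<in> space (gauss n mu s). - (V / 2) \<le> (\<Sum>i<n. - (mu1 i - mu0 i) * (x i - mu0 i))}"
    by (auto simp del: minus_diff_eq simp add: sum_negf)
  have "measure (gauss n mu s)
      {x \<in> space (gauss n mu s). - (V / 2) \<le> (\<Sum>i<n. - (mu1 i - mu0 i) * (x i - mu0 i))}
     \<le> exp (l * ((\<Sum>i<n. - (mu1 i - mu0 i) * (mu i - mu0 i)) - - (V / 2))
        + l\<^sup>2 * s\<^sup>2 * (\<Sum>i<n. (- (mu1 i - mu0 i))\<^sup>2) / 2)"
    by (rule gauss_linear_upper_tail[OF s(1)]) (simp add: l_def)
  also have "\<dots> = exp (l * (- P + V / 2) + l\<^sup>2 * s\<^sup>2 * V / 2)"
    unfolding V_def P_def by (simp del: minus_diff_eq add: sum_negf)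
  also have "\<dots> \<le> exp (- V / (200 * sg\<^sup>2))"
    using exponent by simp
  finally show ?thesis unfolding reflected .
qed

text \<open>\<open>R\<close> is the rejection region of a test of \<open>N(mu0, sg\<^sup>2 I)\<close> against the alternatives \<open>H\<close>.\<close>
definition testable :: "nat \<Rightarrow> (nat \<Rightarrow> real) \<Rightarrow> real \<Rightarrow> ((nat \<Rightarrow> real) \<times> real) set \<Rightarrow> real \<Rightarrow> bool" where
  "testable n mu0 sg H B \<longleftrightarrow> (\<exists>R \<in> sets (PiM {..<n} (\<lambda>_. lborel)).
     measure (gauss n mu0 sg) R \<le> B \<and>
     (\<forall>(mu, s) \<in> H. measure (gauss n mu s) (space (PiM {..<n} (\<lambda>_. lborel)) - R) \<le> B))"

lemma testableI:
  assumes "Measurable.pred (PiM {..<n} (\<lambda>_. lborel)) P"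
    and "measure (gauss n mu0 sg) {x \<in> space (gauss n mu0 sg). P x} \<le> B"
    and "\<And>mu s. (mu, s) \<in> H \<Longrightarrow> measure (gauss n mu s) {x \<in> space (gauss n mu s). \<not> P x} \<le> B"
  shows "testable n mu0 sg H B"
  unfolding testable_def
proof (intro bexI[of _ "{x \<in> space (PiM {..<n} (\<lambda>_. lborel)). P x}"] conjI ballI)
  show "{x \<in> space (PiM {..<n} (\<lambda>_. lborel)). P x} \<in> sets (PiM {..<n} (\<lambda>_. lborel))"
    using assms(1) by (rule predE)
  show "measure (gauss n mu0 sg) {x \<in> space (PiM {..<n} (\<lambda>_. lborel)). P x} \<le> B"
    using assms(2) by (simp add: space_gauss)
  have "space (PiM {..<n} (\<lambda>_. lborel)) - {x \<in> space (PiM {..<n} (\<lambda>_. lborel)). P x} =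
      {x \<in> space (gauss n mu s). \<not> P x}" for mu s
    by (auto simp: space_gauss)
  then show "case p of (mu, s) \<Rightarrow> measure (gauss n mu s)
      (space (PiM {..<n} (\<lambda>_. lborel)) - {x \<in> space (PiM {..<n} (\<lambda>_. lborel)). P x}) \<le> B"
    if "p \<in> H" for p
    using assms(3) that by auto
qed

lemma testable_mono:
  assumes "testable n mu0 sg H B" "H' \<subseteq> H" "B \<le> B'"
  shows "testable n mu0 sg H' B'"
proof -
  obtain R where "R \<in> sets (PiM {..<n} (\<lambda>_. lborel))" "measure (gauss n mu0 sg) R \<le> B"
    and "\<forall>p \<in> H. measure (gauss n (fst p) (snd p)) (space (PiM {..<n} (\<lambda>_. lborel)) - R) \<le> B"
    using assms(1) unfolding testable_def split_beta by blast
  then show ?thesis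
    using assms(2,3) unfolding testable_def split_beta by (blast intro: order_trans)
qed

lemma testable_imp_test:
  assumes "testable n mu0 sg H B" and sg: "sg > 0" and H: "\<forall>(mu, s) \<in> H. s > 0"
  shows "\<exists>phi \<in> borel_measurable (PiM {..<n} (\<lambda>_. lborel)). (\<forall>x. phi x \<in> {0, 1}) \<and>
     (\<integral>x. phi x \<partial>gauss n mu0 sg) \<le> B \<and>
     (\<forall>mu s. (mu, s) \<in> H \<longrightarrow> (\<integral>x. 1 - phi x \<partial>gauss n mu s) \<le> B)"
proof -
  obtain R where R: "R \<in> sets (PiM {..<n} (\<lambda>_. lborel))"
    and type_I: "measure (gauss n mu0 sg) R \<le> B"
    and type_II: "\<forall>(mu, s) \<in> H. measure (gauss n mu s) (space (PiM {..<n} (\<lambda>_. lborel)) - R) \<le> B"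
    using assms(1) unfolding testable_def by blast
  have integral_indicator_gauss: "(\<integral>x. indicator A x \<partial>gauss n mu s) = measure (gauss n mu s) A"
    if "s > 0" "A \<in> sets (PiM {..<n} (\<lambda>_. lborel))" for mu s A
  proof -
    interpret prob_space "gauss n mu s" using \<open>s > 0\<close> by (rule prob_space_gauss)
    show ?thesis using that(2) by (simp add: sets_gauss)
  qed
  show ?thesis
  proof (intro bexI[of _ "indicator R"] conjI allI impI)
    show "(\<integral>x. indicator R x \<partial>gauss n mu0 sg) \<le> B"
      unfolding integral_indicator_gauss[OF sg R] by (rule type_I)
    fix mu s assume "(mu, s) \<in> H"
    then have s: "s > 0"
      and type_II_at: "measure (gauss n mu s) (space (PiM {..<n} (\<lambda>_. lborel)) - R) \<le> B"
      using H type_II by auto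
    have "space (PiM {..<n} (\<lambda>_. lborel)) - R \<in> sets (PiM {..<n} (\<lambda>_. lborel))"
      using R by blast
    have "(\<integral>x. 1 - indicator R x \<partial>gauss n mu s) =
        (\<integral>x. indicator (space (PiM {..<n} (\<lambda>_. lborel)) - R) x \<partial>gauss n mu s)"
      by (intro Bochner_Integration.integral_cong) (auto simp: space_gauss indicator_def)
    also have "\<dots> = measure (gauss n mu s) (space (PiM {..<n} (\<lambda>_. lborel)) - R)"
      by (rule integral_indicator_gauss[OF s]) fact
    finally show "(\<integral>x. 1 - indicator R x \<partial>gauss n mu s) \<le> B"
      using type_II_at by simp
  qed (use R in \<open>auto simp: indicator_def\<close>)
qed

lemma exp_neg_divide_mono:
  fixes a c c' :: real
  assumes "0 \<le> a" "0 < c" "c \<le> c'"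
  shows "exp (- a / c) \<le> exp (- a / c')"
proof -
  have "a / c' \<le> a / c" using assms by (intro divide_left_mono) auto
  then show ?thesis by simp
qed

lemma testable_variance_increase:
  fixes mu0 :: "nat \<Rightarrow> real"
  assumes sg: "sg > 0" and d: "0 < d" "d < sg"
  shows "testable n mu0 sg {(mu, s). sg + d / 3 \<le> s} (exp (- real n * d\<^sup>2 / (200 * sg\<^sup>2)))"
proof (rule testableI)
  show "Measurable.pred (PiM {..<n} (\<lambda>_. lborel))
      (\<lambda>x. real n * (sg\<^sup>2 + sg * d / 3) < (\<Sum>i<n. (x i - mu0 i)\<^sup>2))"
    by measurable
  have "exp (- real n * d\<^sup>2 / (144 * sg\<^sup>2)) \<le> exp (- real n * d\<^sup>2 / (200 * sg\<^sup>2))"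
    using exp_neg_divide_mono[of "real n * d\<^sup>2" "144 * sg\<^sup>2" "200 * sg\<^sup>2"] sg by simp
  then show "measure (gauss n mu0 sg) {x \<in> space (gauss n mu0 sg).
      real n * (sg\<^sup>2 + sg * d / 3) < (\<Sum>i<n. (x i - mu0 i)\<^sup>2)} \<le> exp (- real n * d\<^sup>2 / (200 * sg\<^sup>2))"
    by (rule order_trans[OF variance_increase_type_I[OF sg d]])
  show "measure (gauss n mu s) {x \<in> space (gauss n mu s).
      \<not> real n * (sg\<^sup>2 + sg * d / 3) < (\<Sum>i<n. (x i - mu0 i)\<^sup>2)} \<le> exp (- real n * d\<^sup>2 / (200 * sg\<^sup>2))"
    if "(mu, s) \<in> {(mu, s). sg + d / 3 \<le> s}" for mu s
    using variance_increase_type_II[OF sg d, of s] that by (simp add: not_less)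
qed

lemma testable_variance_decrease:
  fixes mu0 mu1 :: "nat \<Rightarrow> real"
  assumes sg: "sg > 0" and d: "0 < d" "d < sg"
  shows "testable n mu0 sg
      {(mu, s). 0 < s \<and> s \<le> sg - d / 3 \<and> (\<Sum>i<n. (mu i - mu1 i)\<^sup>2) \<le> real n * d\<^sup>2 / 36}
      (exp (- real n * d\<^sup>2 / (432 * sg\<^sup>2)))"
proof (rule testableI)
  show "Measurable.pred (PiM {..<n} (\<lambda>_. lborel))
      (\<lambda>x. (\<Sum>i<n. (x i - mu1 i)\<^sup>2) < real n * (sg\<^sup>2 - sg * d / 3))"
    by measurable
  have "exp (- real n * d\<^sup>2 / (72 * sg\<^sup>2)) \<le> exp (- real n * d\<^sup>2 / (432 * sg\<^sup>2))"
    using exp_neg_divide_mono[of "real n * d\<^sup>2" "72 * sg\<^sup>2" "432 * sg\<^sup>2"] sg by simp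
  then show "measure (gauss n mu0 sg) {x \<in> space (gauss n mu0 sg).
      (\<Sum>i<n. (x i - mu1 i)\<^sup>2) < real n * (sg\<^sup>2 - sg * d / 3)} \<le> exp (- real n * d\<^sup>2 / (432 * sg\<^sup>2))"
    by (rule order_trans[OF variance_decrease_type_I[OF sg d]])
  show "measure (gauss n mu s) {x \<in> space (gauss n mu s).
      \<not> (\<Sum>i<n. (x i - mu1 i)\<^sup>2) < real n * (sg\<^sup>2 - sg * d / 3)} \<le> exp (- real n * d\<^sup>2 / (432 * sg\<^sup>2))"
    if "(mu, s) \<in> {(mu, s). 0 < s \<and> s \<le> sg - d / 3 \<and> (\<Sum>i<n. (mu i - mu1 i)\<^sup>2) \<le> real n * d\<^sup>2 / 36}"
    for mu s
  proof -
    from that have s: "0 < s" "s \<le> sg - d / 3" and mean: "(\<Sum>i<n. (mu i - mu1 i)\<^sup>2) \<le> real n * d\<^sup>2 / 36"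
      by auto
    show ?thesis using variance_decrease_type_II[OF sg d s mean] by (simp add: not_less)
  qed
qed

lemma testable_mean_shift:
  fixes mu0 mu1 :: "nat \<Rightarrow> real" and n :: nat
  assumes sg: "sg > 0"
  defines "V \<equiv> \<Sum>i<n. (mu1 i - mu0 i)\<^sup>2"
  shows "testable n mu0 sg
      {(mu, s). 0 < s \<and> s \<le> 2 * sg \<and> (\<Sum>i<n. (mu i - mu1 i)\<^sup>2) \<le> V / 27}
      (exp (- V / (200 * sg\<^sup>2)))"
proof (rule testableI)
  show "Measurable.pred (PiM {..<n} (\<lambda>_. lborel))
      (\<lambda>x. V / 2 < (\<Sum>i<n. (mu1 i - mu0 i) * (x i - mu0 i)))"
    by measurable
  have "exp (- V / (8 * sg\<^sup>2)) \<le> exp (- V / (200 * sg\<^sup>2))"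
    using sg unfolding V_def by (intro exp_neg_divide_mono) (auto simp: sum_nonneg)
  then show "measure (gauss n mu0 sg) {x \<in> space (gauss n mu0 sg).
      V / 2 < (\<Sum>i<n. (mu1 i - mu0 i) * (x i - mu0 i))} \<le> exp (- V / (200 * sg\<^sup>2))"
    unfolding V_def by (rule order_trans[OF mean_shift_type_I[OF sg]])
  show "measure (gauss n mu s) {x \<in> space (gauss n mu s).
      \<not> V / 2 < (\<Sum>i<n. (mu1 i - mu0 i) * (x i - mu0 i))} \<le> exp (- V / (200 * sg\<^sup>2))"
    if "(mu, s) \<in> {(mu, s). 0 < s \<and> s \<le> 2 * sg \<and> (\<Sum>i<n. (mu i - mu1 i)\<^sup>2) \<le> V / 27}"
    for mu s
  proof -
    from that have s: "0 < s" "s \<le> 2 * sg" and mean: "(\<Sum>i<n. (mu i - mu1 i)\<^sup>2) \<le> V / 27"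
      by auto
    show ?thesis
      using mean_shift_type_II[OF sg s mean[unfolded V_def]] unfolding V_def by (simp add: not_less)
  qed
qed

lemma gdist_sq: "(gdist n p q)\<^sup>2 = (\<Sum>i<n. (fst p i - fst q i)\<^sup>2) / real n + (snd p - snd q)\<^sup>2"
  unfolding gdist_def by (simp add: sum_nonneg)

lemma gdist_leD:
  assumes "gdist n (mu, s) (mu', s') \<le> r" "n \<ge> 1"
  shows "(\<Sum>i<n. (mu i - mu' i)\<^sup>2) \<le> real n * r\<^sup>2" and "\<bar>s - s'\<bar> \<le> r"
proof -
  have D: "(\<Sum>i<n. (mu i - mu' i)\<^sup>2) / real n \<ge> 0" by (simp add: sum_nonneg)
  have "0 \<le> gdist n (mu, s) (mu', s')" unfolding gdist_def using D by simp
  then have r: "0 \<le> r" and "(gdist n (mu, s) (mu', s'))\<^sup>2 \<le> r\<^sup>2"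
    using assms(1) by (auto intro: power_mono)
  then have sq: "(\<Sum>i<n. (mu i - mu' i)\<^sup>2) / real n + (s - s')\<^sup>2 \<le> r\<^sup>2"
    unfolding gdist_sq by simp
  have "(\<Sum>i<n. (mu i - mu' i)\<^sup>2) / real n \<le> r\<^sup>2" using sq zero_le_power2[of "s - s'"] by linarith
  then show "(\<Sum>i<n. (mu i - mu' i)\<^sup>2) \<le> real n * r\<^sup>2" using assms(2) by (simp add: field_simps)
  have "(s - s')\<^sup>2 \<le> r\<^sup>2" using sq D by linarith
  then show "\<bar>s - s'\<bar> \<le> r" using r by (simp add: power2_le_iff_abs_le)
qed

lemma testable_gdist_separated:
  fixes mu0 mu1 :: "nat \<Rightarrow> real"
  assumes n: "n \<ge> 1" and sg: "sg > 0" and d: "0 < d" "d < sg"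
    and sep: "d \<le> gdist n (mu1, sig1) (mu0, sg)"
  shows "testable n mu0 sg {(mu, s). 0 < s \<and> gdist n (mu, s) (mu1, sig1) \<le> d / 6}
      (exp (- real n * d\<^sup>2 / (1000 * sg\<^sup>2)))"
proof -
  let ?ball = "{(mu, s). 0 < s \<and> gdist n (mu, s) (mu1, sig1) \<le> d / 6}"
  define V where "V = (\<Sum>i<n. (mu1 i - mu0 i)\<^sup>2)"
  have ball_subset: "?ball \<subseteq> H"
    if "\<And>mu s. 0 < s \<Longrightarrow> (\<Sum>i<n. (mu i - mu1 i)\<^sup>2) \<le> real n * d\<^sup>2 / 36 \<Longrightarrow>
        sig1 - d / 6 \<le> s \<Longrightarrow> s \<le> sig1 + d / 6 \<Longrightarrow> (mu, s) \<in> H" for H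
  proof
    fix p assume "p \<in> ?ball"
    then obtain mu s where p: "p = (mu, s)" "0 < s" "gdist n (mu, s) (mu1, sig1) \<le> d / 6"
      by auto
    have "(\<Sum>i<n. (mu i - mu1 i)\<^sup>2) \<le> real n * d\<^sup>2 / 36"
      using gdist_leD(1)[OF p(3) n] by (simp add: power_divide)
    moreover have "sig1 - d / 6 \<le> s" "s \<le> sig1 + d / 6"
      using gdist_leD(2)[OF p(3) n] by arith+
    ultimately show "p \<in> H" unfolding p(1) by (rule that[OF p(2)])
  qed
  have exp_bound: "exp (- real n * d\<^sup>2 / (c * sg\<^sup>2)) \<le> exp (- real n * d\<^sup>2 / (1000 * sg\<^sup>2))"
    if "0 < c" "c \<le> 1000" for c
    using exp_neg_divide_mono[of "real n * d\<^sup>2" "c * sg\<^sup>2" "1000 * sg\<^sup>2"] that sg by simp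
  consider "sg + d / 2 \<le> sig1" | "sig1 \<le> sg - d / 2" | "sg - d / 2 < sig1 \<and> sig1 < sg + d / 2"
    by linarith
  then show ?thesis
  proof cases
    case 1
    then have "?ball \<subseteq> {(mu, s). sg + d / 3 \<le> s}" by (intro ball_subset) auto
    then show ?thesis
      using exp_bound[of 200] by (intro testable_mono[OF testable_variance_increase[OF sg d]]) simp_all
  next
    case 2
    then have "?ball \<subseteq> {(mu, s). 0 < s \<and> s \<le> sg - d / 3 \<and> (\<Sum>i<n. (mu i - mu1 i)\<^sup>2) \<le> real n * d\<^sup>2 / 36}"
      using 2 by (intro ball_subset) auto
    then show ?thesis
      using exp_bound[of 432] by (intro testable_mono[OF testable_variance_decrease[OF sg d]]) simp_all
  next
    case 3
    have "d\<^sup>2 \<le> (gdist n (mu1, sig1) (mu0, sg))\<^sup>2" using sep d by (intro power_mono) auto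
    then have "d\<^sup>2 \<le> V / real n + (sig1 - sg)\<^sup>2" unfolding gdist_sq V_def by simp
    moreover have "\<bar>sig1 - sg\<bar>\<^sup>2 \<le> (d / 2)\<^sup>2" using 3 by (intro power_mono) arith+
    then have "(sig1 - sg)\<^sup>2 \<le> (d / 2)\<^sup>2" by simp
    moreover have "(d / 2)\<^sup>2 = d\<^sup>2 / 4" by (simp add: power_divide)
    ultimately have "3 * d\<^sup>2 / 4 \<le> V / real n" by linarith
    then have V: "3 * real n * d\<^sup>2 / 4 \<le> V" using n by (simp add: field_simps)
    have "?ball \<subseteq> {(mu, s). 0 < s \<and> s \<le> 2 * sg \<and> (\<Sum>i<n. (mu i - mu1 i)\<^sup>2) \<le> V / 27}"
      using 3 d V by (intro ball_subset) auto
    moreover have "exp (- V / (200 * sg\<^sup>2)) \<le> exp (- real n * d\<^sup>2 / (1000 * sg\<^sup>2))"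
    proof -
      have "0 \<le> real n * d\<^sup>2" by simp
      then have "real n * d\<^sup>2 / 1000 \<le> V / 200" using V by linarith
      then have "real n * d\<^sup>2 / 1000 / sg\<^sup>2 \<le> V / 200 / sg\<^sup>2" by (rule divide_right_mono) simp
      then show ?thesis by simp
    qed
    ultimately show ?thesis
      unfolding V_def by (rule testable_mono[OF testable_mean_shift[OF sg]])
  qed
qed

theorem theorem1:
  shows "\<exists>K>0. \<forall>(n::nat) (mu0::nat \<Rightarrow> real) (sig0::real) (eps::real) (mu1::nat \<Rightarrow> real) (sig1::real).
     n \<ge> 1 \<and> sig0 > 0 \<and> 0 < eps \<and> eps < sig0 \<and> sig1 > 0 \<and>
     gdist n (mu1, sig1) (mu0, sig0) \<ge> eps \<longrightarrow>
     (\<exists>phi \<in> borel_measurable (PiM {..<n} (\<lambda>_. lborel)).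
        (\<forall>x. phi x \<in> {0, 1}) \<and>
        (\<integral>x. phi x \<partial>gauss n mu0 sig0) \<le> exp (- K * real n * eps^2 / sig0^2) \<and>
        (\<forall>mu s. s > 0 \<and> gdist n (mu, s) (mu1, sig1) \<le> eps / 6 \<longrightarrow>
           (\<integral>x. 1 - phi x \<partial>gauss n mu s) \<le> exp (- K * real n * eps^2 / sig0^2)))"
proof (intro exI[of _ "1 / 1000"] conjI allI impI)
  fix n :: nat and mu0 mu1 :: "nat \<Rightarrow> real" and sig0 eps sig1 :: real
  assume "n \<ge> 1 \<and> sig0 > 0 \<and> 0 < eps \<and> eps < sig0 \<and> sig1 > 0 \<and> gdist n (mu1, sig1) (mu0, sig0) \<ge> eps"
  then have "n \<ge> 1" "sig0 > 0" "0 < eps" "eps < sig0" "eps \<le> gdist n (mu1, sig1) (mu0, sig0)"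
    by auto
  then have "testable n mu0 sig0 {(mu, s). 0 < s \<and> gdist n (mu, s) (mu1, sig1) \<le> eps / 6}
      (exp (- (1 / 1000) * real n * eps\<^sup>2 / sig0\<^sup>2))"
    using testable_gdist_separated by simp
  with \<open>sig0 > 0\<close> show "\<exists>phi \<in> borel_measurable (PiM {..<n} (\<lambda>_. lborel)).
        (\<forall>x. phi x \<in> {0, 1}) \<and>
        (\<integral>x. phi x \<partial>gauss n mu0 sig0) \<le> exp (- (1 / 1000) * real n * eps^2 / sig0^2) \<and>
        (\<forall>mu s. s > 0 \<and> gdist n (mu, s) (mu1, sig1) \<le> eps / 6 \<longrightarrow>
           (\<integral>x. 1 - phi x \<partial>gauss n mu s) \<le> exp (- (1 / 1000) * real n * eps^2 / sig0^2))"
    by (auto dest!: testable_imp_test)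
qed simp

end
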